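(* For every $n\ge1$, the number of permutations $\pi$ of $\{1,\dots,n\}$ whose Schröder insertion tableau $P(\pi)$ consists of a single column (every row has at most $2$ cells) is $2^{n-1}$.
   Context: A Schröder tableau consists of rows $1,2,\dots$; row $r$ has $\lambda_r$ cells at positions $1,\dots,\lambda_r$, each filled with a number; cells at odd positions are upper triangles, at even positions lower triangles. The Schröder insertion tableau $P(\pi)$ of $\pi=\pi_1\cdots\pi_n$ is built as follows. Start with $P$ having one row containing $\pi_1$. For $k=2,\dots,n$, insert $\alpha=\pi_k$ into row $i=1$ by the rule: if row $i$ is empty or $\alpha$ is larger than all its entries, place $\alpha$ in a new cell at the end of row $i$ and stop. Otherwise let $j$ be the position in row $i$ of the smallest entry larger than $\alpha$. If $j$ is even: remove the entry $\beta$ at position $j$, write $\alpha$ there, and insert $\beta$ into row $i+1$ by the same rule. If $j$ is odd and position $j+1$ exists in row $i$ with entry $\beta$: move the entry of position $j$ to position $j+1$, write $\alpha$ at position $j$, and insert $\beta$ into row $i+1$. If $j$ is odd and is the last position of row $i$: move the entry of position $j$ into a new cell at position $j+1$ at the end of row $i$, write $\alpha$ at position $j$, and stop. The final $P$ is $P(\pi)$. *)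

theory Defs
  imports Main
begin

text \<open>A Schroeder tableau is a list of rows (row 1 first); each row is the list of
entries at positions 1,2,...  (list index k corresponds to position k+1, so odd
positions = upper triangles are even list indices).\<close>

definition succ_idx :: "nat \<Rightarrow> nat list \<Rightarrow> nat" where
  "succ_idx a r = (LEAST k. k < length r \<and> r ! k = Min {x \<in> set r. a < x})"

fun schroeder_ins :: "nat \<Rightarrow> nat list list \<Rightarrow> nat list list" where
  "schroeder_ins a [] = [[a]]"
| "schroeder_ins a (r # rs) =
    (if r = [] \<or> (\<forall>x\<in>set r. x < a) then (r @ [a]) # rs
     else (let k = succ_idx a r in
       if odd k then
         (r[k := a]) # schroeder_ins (r ! k) rs
       else if k + 1 < length r then
         (r[k := a, k + 1 := r ! k]) # schroeder_ins (r ! (k + 1)) rs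
       else
         (r[k := a] @ [r ! k]) # rs))"

definition schroeder_P :: "nat list \<Rightarrow> nat list list" where
  "schroeder_P \<pi> = fold schroeder_ins (tl \<pi>) [[hd \<pi>]]"

end

theory Submission
  imports Defs
begin

text \<open>As long as every row has at most two cells, the tableau is a single column holding the
entries inserted so far in increasing order, read row by row.  Inserting \<open>\<alpha>\<close> below the second
smallest entry bumps the column down by one cell and keeps this shape; inserting it above makes
the first row three cells long, and rows never shrink.  Hence \<open>P(\<pi>)\<close> is a single column iff each
\<open>\<pi>\<^sub>k\<close> exceeds at most one of \<open>\<pi>\<^sub>1, \<dots>, \<pi>\<^sub>k\<^sub>-\<^sub>1\<close>.  Read backwards, such a permutation
of a set ends in its least or second least element, followed by such a permutation of the rest:
two choices at each of \<open>n - 1\<close> steps.\<close>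

fun single_column :: "nat list \<Rightarrow> nat list list" where
  "single_column [] = []"
| "single_column [a] = [[a]]"
| "single_column (a # b # rest) = [a, b] # single_column rest"

fun at_most_one_smaller_after :: "'a::linorder list \<Rightarrow> bool" where
  "at_most_one_smaller_after [] = True"
| "at_most_one_smaller_after (x # rs) =
     (at_most_one_smaller_after rs \<and> card {y \<in> set rs. y < x} \<le> 1)"

lemma succ_idx_sorted:
  assumes "sorted_wrt (<) r" "i < length r" "x < r ! i" "\<forall>j<i. r ! j < x"
  shows "succ_idx x r = i"
proof -
  have "Min {y \<in> set r. x < y} = r ! i"
  proof (rule Min_eqI)
    fix y assume "y \<in> {y \<in> set r. x < y}"
    then obtain j where "j < length r" "r ! j = y" "x < y" by (auto simp: in_set_conv_nth)
    have "\<not> j < i" using assms(4) \<open>r ! j = y\<close> \<open>x < y\<close> by auto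
    then show "r ! i \<le> y"
      using assms(1) \<open>j < length r\<close> \<open>r ! j = y\<close>
      by (cases "i = j") (auto simp: sorted_wrt_iff_nth_less less_imp_le)
  qed (use assms in auto)
  moreover have "distinct r" using assms(1) by (simp add: strict_sorted_iff)
  ultimately show ?thesis unfolding succ_idx_def using assms(2)
    by (intro Least_equality) (auto simp: nth_eq_iff_index_eq)
qed

lemma length_schroeder_ins_ge: "length T \<le> length (schroeder_ins x T)"
  by (induction x T rule: schroeder_ins.induct) (simp_all add: Let_def)

lemma length_nth_schroeder_ins_ge:
  "i < length T \<Longrightarrow> length (T ! i) \<le> length (schroeder_ins x T ! i)"
proof (induction x T arbitrary: i rule: schroeder_ins.induct)
  case (2 a r rs)
  then show ?case
    by (cases i) (simp_all add: Let_def)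
qed simp

lemma long_row_schroeder_ins:
  assumes "\<exists>row\<in>set T. 2 < length row"
  shows "\<exists>row\<in>set (schroeder_ins x T). 2 < length row"
proof -
  obtain i where i: "i < length T" "2 < length (T ! i)"
    using assms by (auto simp: in_set_conv_nth)
  have "i < length (schroeder_ins x T)"
    using i(1) length_schroeder_ins_ge[of T x] by linarith
  moreover have "2 < length (schroeder_ins x T ! i)"
    using i length_nth_schroeder_ins_ge[of i T x] by linarith
  ultimately show ?thesis by (metis nth_mem)
qed

lemma length_row_single_column: "row \<in> set (single_column c) \<Longrightarrow> length row \<le> 2"
  by (induction c rule: single_column.induct) auto

lemma schroeder_ins_single_column:
  assumes "sorted_wrt (<) c" "x \<notin> set c" "length c \<le> 1 \<or> x < c ! 1"
  shows "schroeder_ins x (single_column c) = single_column (insort x c)"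
  using assms
proof (induction c arbitrary: x rule: single_column.induct)
  case (2 a)
  then show ?case
    by (cases "x < a") (auto simp: succ_idx_sorted Let_def)
next
  case (3 a b rest)
  have ab: "a < b" and b_rest: "\<forall>y\<in>set rest. b < y" and rest: "sorted_wrt (<) rest"
    using "3.prems"(1) by auto
  have "schroeder_ins b (single_column rest) = single_column (insort b rest)"
  proof (rule "3.IH"[OF rest])
    show "b \<notin> set rest" using b_rest by blast
    show "length rest \<le> 1 \<or> b < rest ! 1"
      using b_rest by (metis leI nth_mem)
  qed
  also have "insort b rest = b # rest"
    using b_rest by (simp add: insort_is_Cons less_imp_le)
  finally have bumped: "schroeder_ins b (single_column rest) = single_column (b # rest)" .
  have "x < b" using "3.prems"(3) by simp
  show ?case
  proof (cases "x < a")
    case True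
    then show ?thesis
      using ab bumped b_rest \<open>x < b\<close> by (auto simp: succ_idx_sorted[of "[a, b]" 0] Let_def)
  next
    case False
    then have "a < x" using "3.prems"(2) by auto
    then show ?thesis
      using ab bumped b_rest \<open>x < b\<close>
      by (auto simp: succ_idx_sorted[of "[a, b]" 1] nth_Cons' Let_def)
  qed
qed simp

lemma schroeder_ins_single_column_overflow:
  assumes "sorted_wrt (<) c" "2 \<le> length c" "c ! 1 < x"
  shows "\<exists>row\<in>set (schroeder_ins x (single_column c)). 2 < length row"
proof -
  obtain a b rest where c: "c = a # b # rest"
    using assms(2) by (metis One_nat_def Suc_1 Suc_le_length_iff)
  have "a < b" "b < x" using assms c by auto
  then have "schroeder_ins x (single_column c) = [a, b, x] # single_column rest"
    using c by simp
  then show ?thesis by simp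
qed

lemma card_less_le_one_iff_sorted:
  fixes c :: "'a::linorder list"
  assumes "sorted_wrt (<) c" "x \<notin> set c"
  shows "card {y \<in> set c. y < x} \<le> 1 \<longleftrightarrow> length c \<le> 1 \<or> x < c ! 1"
proof
  assume card_le: "card {y \<in> set c. y < x} \<le> 1"
  show "length c \<le> 1 \<or> x < c ! 1"
  proof (rule ccontr)
    assume "\<not> (length c \<le> 1 \<or> x < c ! 1)"
    then have len: "2 \<le> length c" and "c ! 1 \<le> x" by auto
    moreover have "c ! 1 \<noteq> x" using assms(2) len by (metis Suc_1 Suc_le_lessD nth_mem)
    moreover have "c ! 0 < c ! 1" using assms(1) len by (simp add: sorted_wrt_iff_nth_less)
    ultimately have "{c ! 0, c ! 1} \<subseteq> {y \<in> set c. y < x}" by (auto intro!: nth_mem)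
    then have "card {c ! 0, c ! 1} \<le> card {y \<in> set c. y < x}" by (intro card_mono) auto
    with card_le \<open>c ! 0 < c ! 1\<close> show False by simp
  qed
next
  assume short_or_below: "length c \<le> 1 \<or> x < c ! 1"
  have "{y \<in> set c. y < x} \<subseteq> set (take 1 c)"
  proof
    fix y assume "y \<in> {y \<in> set c. y < x}"
    then obtain i where i: "i < length c" "c ! i = y" "y < x" by (auto simp: in_set_conv_nth)
    have "i = 0"
    proof (rule ccontr)
      assume "i \<noteq> 0"
      then have "c ! 1 \<le> c ! i"
        using assms(1) i(1) by (cases "i = 1") (auto simp: sorted_wrt_iff_nth_less less_imp_le)
      with i short_or_below \<open>i \<noteq> 0\<close> show False by auto
    qed
    with i show "y \<in> set (take 1 c)" by (simp add: take_Suc_conv_app_nth)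
  qed
  then have "card {y \<in> set c. y < x} \<le> card (set (take 1 c))" by (intro card_mono) auto
  also have "\<dots> \<le> 1" using card_length[of "take 1 c"] by simp
  finally show "card {y \<in> set c. y < x} \<le> 1" .
qed

lemma fold_schroeder_ins_column_or_long_row:
  assumes "distinct xs"
  shows "(at_most_one_smaller_after (rev xs) \<longrightarrow>
            fold schroeder_ins xs [] = single_column (sort xs)) \<and>
         (\<not> at_most_one_smaller_after (rev xs) \<longrightarrow>
            (\<exists>row\<in>set (fold schroeder_ins xs []). 2 < length row))"
  using assms
proof (induction xs rule: rev_induct)
  case (snoc x xs)
  define c where "c = sort xs"
  have "distinct xs" "x \<notin> set c" using snoc.prems by (auto simp: c_def)
  note IH = snoc.IH[OF \<open>distinct xs\<close>]
  have c: "sorted_wrt (<) c" using \<open>distinct xs\<close> by (simp add: c_def strict_sorted_iff)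
  have fold_snoc: "fold schroeder_ins (xs @ [x]) [] = schroeder_ins x (fold schroeder_ins xs [])"
    by simp
  have sort_snoc: "sort (xs @ [x]) = insort x c" by (simp add: c_def sort_conv_fold)
  have cond_snoc: "at_most_one_smaller_after (rev (xs @ [x])) \<longleftrightarrow>
      at_most_one_smaller_after (rev xs) \<and> (length c \<le> 1 \<or> x < c ! 1)"
    using card_less_le_one_iff_sorted[OF c \<open>x \<notin> set c\<close>] by (simp add: c_def)
  show ?case
  proof (cases "at_most_one_smaller_after (rev xs)")
    case True
    then have column: "fold schroeder_ins xs [] = single_column c" using IH by (simp add: c_def)
    show ?thesis
    proof (cases "length c \<le> 1 \<or> x < c ! 1")
      case True
      then show ?thesis
        using column schroeder_ins_single_column[OF c \<open>x \<notin> set c\<close>] cond_snoc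
          \<open>at_most_one_smaller_after (rev xs)\<close>
        by (simp add: sort_snoc)
    next
      case False
      then have "2 \<le> length c" "c ! 1 \<le> x" by auto
      moreover have "c ! 1 \<noteq> x"
        using \<open>x \<notin> set c\<close> \<open>2 \<le> length c\<close> by (metis nth_mem Suc_1 Suc_le_lessD)
      ultimately have "\<exists>row\<in>set (schroeder_ins x (single_column c)). 2 < length row"
        using schroeder_ins_single_column_overflow[OF c] by simp
      then show ?thesis using column cond_snoc False by auto
    qed
  next
    case False
    then show ?thesis using IH cond_snoc long_row_schroeder_ins by simp
  qed
qed simp

lemma schroeder_P_eq_fold: "\<pi> \<noteq> [] \<Longrightarrow> schroeder_P \<pi> = fold schroeder_ins \<pi> []"
  by (cases \<pi>) (simp_all add: schroeder_P_def)

lemma schroeder_P_rows_le_two_iff: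
  assumes "distinct \<pi>" "\<pi> \<noteq> []"
  shows "(\<forall>row\<in>set (schroeder_P \<pi>). length row \<le> 2) \<longleftrightarrow> at_most_one_smaller_after (rev \<pi>)"
  using fold_schroeder_ins_column_or_long_row[OF assms(1)] schroeder_P_eq_fold[OF assms(2)]
    length_row_single_column
  by (cases "at_most_one_smaller_after (rev \<pi>)") (auto simp: not_le)

definition column_words :: "'a::linorder set \<Rightarrow> 'a list set" where
  "column_words S = {rs. distinct rs \<and> set rs = S \<and> at_most_one_smaller_after rs}"

lemma column_words_empty: "column_words {} = {[]}"
  by (auto simp: column_words_def)

lemma finite_column_words: "finite S \<Longrightarrow> finite (column_words S)"
  by (rule finite_subset[OF _ finite_lists_length_le[of S "card S"]])
     (auto simp: column_words_def distinct_card)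

lemma column_words_nonempty:
  assumes "S \<noteq> {}"
  shows "column_words S =
    (\<Union>x\<in>{x \<in> S. card {y \<in> S. y < x} \<le> 1}. Cons x ` column_words (S - {x}))"
proof (intro set_eqI iffI)
  fix rs assume rs: "rs \<in> column_words S"
  with assms obtain x rs' where "rs = x # rs'"
    by (cases rs) (auto simp: column_words_def)
  with rs have "x \<in> S" "rs' \<in> column_words (S - {x})" "card {y \<in> set rs'. y < x} \<le> 1"
    and "set rs' = S - {x}"
    by (auto simp: column_words_def)
  moreover have "{y \<in> S - {x}. y < x} = {y \<in> S. y < x}" by auto
  ultimately show "rs \<in> (\<Union>x\<in>{x \<in> S. card {y \<in> S. y < x} \<le> 1}.
      Cons x ` column_words (S - {x}))"
    using \<open>rs = x # rs'\<close> by auto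
next
  fix rs assume "rs \<in> (\<Union>x\<in>{x \<in> S. card {y \<in> S. y < x} \<le> 1}. Cons x ` column_words (S - {x}))"
  then obtain x rs' where "rs = x # rs'" "x \<in> S" "card {y \<in> S. y < x} \<le> 1"
    "rs' \<in> column_words (S - {x})"
    by auto
  moreover have "{y \<in> S - {x}. y < x} = {y \<in> S. y < x}" by auto
  ultimately show "rs \<in> column_words S" by (auto simp: column_words_def)
qed

lemma at_most_one_smaller_eq_two_least:
  fixes S :: "'a::linorder set"
  assumes "finite S" "2 \<le> card S"
  shows "{x \<in> S. card {y \<in> S. y < x} \<le> 1} = {Min S, Min (S - {Min S})}"
    and "Min S \<noteq> Min (S - {Min S})"
proof -
  define m1 m2 where "m1 = Min S" and "m2 = Min (S - {m1})"
  have "S \<noteq> {}" using assms by auto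
  then have m1: "m1 \<in> S" "\<forall>y\<in>S. m1 \<le> y" using assms(1) by (auto simp: m1_def)
  have "S - {m1} \<noteq> {}" using assms card_mono[of "{m1}" S] by auto
  then have m2: "m2 \<in> S - {m1}" "\<forall>y\<in>S - {m1}. m2 \<le> y"
    using Min_in[of "S - {m1}"] assms(1) by (simp_all add: m2_def)
  show "{x \<in> S. card {y \<in> S. y < x} \<le> 1} = {Min S, Min (S - {Min S})}"
    unfolding m1_def[symmetric] m2_def[symmetric]
  proof (intro set_eqI iffI)
    fix x assume x: "x \<in> {x \<in> S. card {y \<in> S. y < x} \<le> 1}"
    show "x \<in> {m1, m2}"
    proof (rule ccontr)
      assume "x \<notin> {m1, m2}"
      with x m1 m2 have "{m1, m2} \<subseteq> {y \<in> S. y < x}" by force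
      then have "card {m1, m2} \<le> card {y \<in> S. y < x}" using assms(1) by (intro card_mono) auto
      with x m2 show False by auto
    qed
  next
    fix x assume x: "x \<in> {m1, m2}"
    then have "{y \<in> S. y < x} \<subseteq> {m1}"
      using m1 m2 by (auto simp: not_le[symmetric])
    then have "card {y \<in> S. y < x} \<le> 1"
      using card_mono[of "{m1}" "{y \<in> S. y < x}"] by simp
    with x m1 m2 show "x \<in> {x \<in> S. card {y \<in> S. y < x} \<le> 1}" by auto
  qed
  from m2(1) show "Min S \<noteq> Min (S - {Min S})" unfolding m2_def m1_def by (metis DiffD2 singletonI)
qed

lemma card_column_words:
  fixes S :: "'a::linorder set"
  shows "finite S \<Longrightarrow> card S = Suc n \<Longrightarrow> card (column_words S) = 2 ^ n"
proof (induction n arbitrary: S)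
  case 0
  then obtain a where S: "S = {a}" by (auto simp: card_Suc_eq)
  then have "{x \<in> S. card {y \<in> S. y < x} \<le> 1} = {a}" by (auto cong: conj_cong)
  then have "column_words S = Cons a ` column_words {}"
    using column_words_nonempty[of S] S by simp
  then show ?case by (simp add: column_words_empty)
next
  case (Suc n)
  define low where "low = {x \<in> S. card {y \<in> S. y < x} \<le> 1}"
  have "S \<noteq> {}" using Suc.prems by auto
  have "card (column_words S) = (\<Sum>x\<in>low. card (Cons x ` column_words (S - {x})))"
    unfolding column_words_nonempty[OF \<open>S \<noteq> {}\<close>, folded low_def]
  proof (rule card_UN_disjoint)
    show "finite low" using Suc.prems(1) by (simp add: low_def)
  qed (use Suc.prems in \<open>auto simp: finite_column_words\<close>)
  also have "\<dots> = (\<Sum>x\<in>low. 2 ^ n)"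
  proof (rule sum.cong)
    fix x assume "x \<in> low"
    then have "card (S - {x}) = Suc n" using Suc.prems by (simp add: low_def)
    then show "card (Cons x ` column_words (S - {x})) = 2 ^ n"
      using Suc.IH Suc.prems(1) by (simp add: card_image)
  qed simp
  also have "card low = 2"
    using at_most_one_smaller_eq_two_least[of S] Suc.prems by (simp add: low_def)
  then have "(\<Sum>x\<in>low. 2 ^ n) = (2::nat) ^ Suc n" by simp
  finally show ?case .
qed

theorem mainTheorem10:
  fixes n :: nat
  assumes "n \<ge> 1"
  shows "card {\<pi> :: nat list. distinct \<pi> \<and> set \<pi> = {1..n} \<and>
                 (\<forall>row \<in> set (schroeder_P \<pi>). length row \<le> 2)} = 2 ^ (n - 1)"
proof -
  have members: "distinct \<pi> \<and> set \<pi> = {1..n} \<and> (\<forall>row \<in> set (schroeder_P \<pi>). length row \<le> 2)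
      \<longleftrightarrow> rev \<pi> \<in> column_words {1..n}" for \<pi>
    using schroeder_P_rows_le_two_iff[of \<pi>] assms by (cases \<pi>) (auto simp: column_words_def)
  have "{\<pi>. distinct \<pi> \<and> set \<pi> = {1..n} \<and> (\<forall>row \<in> set (schroeder_P \<pi>). length row \<le> 2)}
      = rev ` column_words {1..n}"
    unfolding members by (auto intro: rev_image_eqI)
  moreover have "card (column_words {1..n}) = 2 ^ (n - 1)"
    using assms by (intro card_column_words) auto
  ultimately show ?thesis by (simp add: card_image)
qed

end
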